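(* Let $\mathcal{X},\mathcal{Y}$ be real Hilbert spaces, $a:\mathcal{X}\times\mathcal{Y}\to\mathbb{R}$ bilinear with $|a(w,v)|\le C_a\|w\|_\mathcal{X}\|v\|_\mathcal{Y}$, $f\in\mathcal{Y}^\star$, and $u\in\mathcal{X}$ with $a(u,v)=f(v)$ for all $v\in\mathcal{Y}$. Let $\ell,N\in\mathbb{N}$ and let $\mathcal{X}_\ell\subseteq\mathcal{X}_{\ell+1}\subseteq\dots\subseteq\mathcal{X}_{\ell+N+1}\subseteq\mathcal{X}$ and $\mathcal{Y}_\ell\subseteq\dots\subseteq\mathcal{Y}_{\ell+N+1}\subseteq\mathcal{Y}$ be finite-dimensional subspaces with $\dim\mathcal{X}_{\ell+k}=\dim\mathcal{Y}_{\ell+k}$ and $\inf_{w\in\mathcal{X}_{\ell+k}}\sup_{v\in\mathcal{Y}_{\ell+k}}\frac{a(w,v)}{\|w\|_\mathcal{X}\|v\|_\mathcal{Y}}\ge\gamma>0$ for $k=0,\dots,N+1$, and let $u_{\ell+k}\in\mathcal{X}_{\ell+k}$ be the unique solutions of $a(u_{\ell+k},v)=f(v)$ for all $v\in\mathcal{Y}_{\ell+k}$. Let $M$ be the block matrix associated with these spaces as in the context. If $M$ has a normalized block-$LU$-factorization $M=LU$, then $$\sum_{k=\ell}^{\ell+N}\|u_{k+1}-u_k\|_\mathcal{X}^2\le\frac{C_a^2}{\gamma^2}\,\|U\|_2^2\max_{k=1,\dots,N+1}\|U^{-1}(:,k)\|_2^2\,\|u-u_\ell\|_\mathcal{X}^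2.$$
   Context: Nested orthonormal basis: let $\mathcal{B}_0^\mathcal{X}$ be an $\mathcal{X}$-orthonormal basis of $\mathcal{X}_\ell$ and, for $j=1,\dots,N+1$, $\mathcal{B}_j^\mathcal{X}$ an $\mathcal{X}$-orthonormal basis of $\{v\in\mathcal{X}_{\ell+j}: v\perp_\mathcal{X}\mathcal{X}_{\ell+j-1}\}$; analogously $\mathcal{B}_j^\mathcal{Y}$ with respect to $\mathcal{Y}$. Enumerate $\bigcup_j\mathcal{B}^\mathcal{X}_j=\{w_1^\mathcal{X},\dots,w_{\rm dim}^\mathcal{X}\}$ (${\rm dim}=\dim\mathcal{X}_{\ell+N+1}$) so that functions of $\mathcal{B}_j^\mathcal{X}$ precede those of $\mathcal{B}_{j+1}^\mathcal{X}$, and likewise $w_r^\mathcal{Y}$. Block structure: $n_0=0$, $n_{j+1}:=\dim\mathcal{X}_{\ell+j}$, $j=0,\dots,N+1$. $M\in\mathbb{R}^{{\rm dim}\times{\rm dim}}$, $M_{rt}:=a(w_t^\mathcal{X},w_r^\mathcal{Y})$. For a block matrix, block $(i,j)$ (indices from $0$) consists of rows $n_i+1,\dots,n_{i+1}$ and columns $n_j+1,\dots,n_{j+1}$; $M(:,j)$ denotes the $j$-th block column. A normalized block-$LU$-factorization is $M=LU$ with $L$ block lower triangular with identity diagonal blocks and $U$ block upper triangular. $\|\cdot\|_2$ is the spectral norm. *)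

theory Defs
  imports "HOL-Analysis.Analysis"
begin

definition fin_dim_subspace :: "'a::real_vector set \<Rightarrow> bool" where
  "fin_dim_subspace S \<longleftrightarrow> subspace S \<and> (\<exists>B. finite B \<and> span B = S)"

definition blk_bd :: "(nat \<Rightarrow> 'a::real_vector set) \<Rightarrow> nat \<Rightarrow> nat \<Rightarrow> nat" where
  "blk_bd Xs l j = (if j = 0 then 0 else dim (Xs (l + (j - 1))))"

definition blk_space :: "(nat \<Rightarrow> 'a::real_inner set) \<Rightarrow> nat \<Rightarrow> nat \<Rightarrow> 'a set" where
  "blk_space Xs l j = (if j = 0 then Xs l
     else {v \<in> Xs (l + j). \<forall>x \<in> Xs (l + j - 1). inner v x = 0})"

definition is_onb :: "(nat \<Rightarrow> 'a::real_inner) \<Rightarrow> nat set \<Rightarrow> 'a set \<Rightarrow> bool" where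
  "is_onb w I S \<longleftrightarrow> (\<forall>i\<in>I. w i \<in> S) \<and>
     (\<forall>i\<in>I. \<forall>j\<in>I. inner (w i) (w j) = (if i = j then 1 else 0)) \<and>
     span (w ` I) = S"

text \<open>Nested orthonormal basis (0-based enumeration w_0, ..., w_(dim-1)): for each
  j = 0..N+1 the functions with indices n_j, ..., n_(j+1)-1 form the orthonormal basis
  B_j of the j-th block space; the functions of B_j precede those of B_(j+1).\<close>
definition nested_onb :: "(nat \<Rightarrow> 'a::real_inner set) \<Rightarrow> nat \<Rightarrow> nat \<Rightarrow> (nat \<Rightarrow> 'a) \<Rightarrow> bool" where
  "nested_onb Xs l N w \<longleftrightarrow>
     (\<forall>j \<le> N + 1. is_onb w {blk_bd Xs l j..<blk_bd Xs l (Suc j)} (blk_space Xs l j))"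

text \<open>Matrices are functions nat => nat => real, only entries with indices
  below the stated sizes are relevant (0-based indices).\<close>
definition in_block :: "(nat \<Rightarrow> nat) \<Rightarrow> nat \<Rightarrow> nat \<Rightarrow> bool" where
  "in_block n b i \<longleftrightarrow> n b \<le> i \<and> i < n (Suc b)"

definition block_lower_unit :: "(nat \<Rightarrow> nat) \<Rightarrow> nat \<Rightarrow> (nat \<Rightarrow> nat \<Rightarrow> real) \<Rightarrow> bool" where
  "block_lower_unit n nb L \<longleftrightarrow>
     (\<forall>bi < nb. \<forall>bj < nb. \<forall>i j. in_block n bi i \<longrightarrow> in_block n bj j \<longrightarrow>
        (bi < bj \<longrightarrow> L i j = 0) \<and> (bi = bj \<longrightarrow> L i j = (if i = j then 1 else 0)))"

definition block_upper :: "(nat \<Rightarrow> nat) \<Rightarrow> nat \<Rightarrow> (nat \<Rightarrow> nat \<Rightarrow> real) \<Rightarrow> bool" where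
  "block_upper n nb U \<longleftrightarrow>
     (\<forall>bi < nb. \<forall>bj < nb. \<forall>i j. in_block n bi i \<longrightarrow> in_block n bj j \<longrightarrow>
        (bj < bi \<longrightarrow> U i j = 0))"

definition mat_mul :: "nat \<Rightarrow> (nat \<Rightarrow> nat \<Rightarrow> real) \<Rightarrow> (nat \<Rightarrow> nat \<Rightarrow> real) \<Rightarrow> nat \<Rightarrow> nat \<Rightarrow> real" where
  "mat_mul d A B i j = (\<Sum>k<d. A i k * B k j)"

definition spec_norm :: "nat \<Rightarrow> nat \<Rightarrow> (nat \<Rightarrow> nat \<Rightarrow> real) \<Rightarrow> real" where
  "spec_norm r c A = Sup {sqrt (\<Sum>i<r. (\<Sum>j<c. A i j * x j)^2) | x. (\<Sum>j<c. (x j)^2) \<le> 1}"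

text \<open>Spectral norm of the block column k (0-based block index) of a d x d matrix.\<close>
definition block_col_norm :: "(nat \<Rightarrow> nat) \<Rightarrow> nat \<Rightarrow> (nat \<Rightarrow> nat \<Rightarrow> real) \<Rightarrow> nat \<Rightarrow> real" where
  "block_col_norm n d A k = spec_norm d (n (Suc k) - n k) (\<lambda>i j. A i (n k + j))"

end

theory Submission
  imports Defs
begin

text \<open>
  Write P_j for the coefficient vector of u_(l+j) in the nested orthonormal basis of X_(l+N+1).
  It vanishes beyond index n_(j+1), and the Galerkin equations are the first n_(j+1) rows of
  M P_j = F. As L is unit lower triangular, these rows force U P_j to be the truncation of
  g = U P_(N+1) to its first n_(j+1) entries, so P_(j+1) - P_j = U^-1(:,j+1) g_(j+1), where
  g_(j+1) is block j+1 of g. Summing over the blocks bounds the left-hand side by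
  max_k |U^-1(:,k)|^2 times the squared norm of g outside block 0; there g agrees with
  U (P_(N+1) - P_0), whose norm is at most |U| |u_(l+N+1) - u_l|. Finally u_(l+N+1) - u_l and
  u - u_l act identically on Y_(l+N+1), so the inf-sup condition there gives
  |u_(l+N+1) - u_l| <= C_a / gamma |u - u_l|.
\<close>

section \<open>Block matrices\<close>

definition mat_vec :: "nat \<Rightarrow> (nat \<Rightarrow> nat \<Rightarrow> real) \<Rightarrow> (nat \<Rightarrow> real) \<Rightarrow> nat \<Rightarrow> real" where
  "mat_vec c A x i = (\<Sum>j<c. A i j * x j)"

lemma mat_vec_diff: "mat_vec c A (\<lambda>j. x j - y j) i = mat_vec c A x i - mat_vec c A y i"
  by (simp add: mat_vec_def right_diff_distrib sum_subtractf)

lemma mat_vec_mat_mul: "mat_vec d A (mat_vec d B x) i = mat_vec d (mat_mul d A B) x i"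
proof -
  have "mat_vec d A (mat_vec d B x) i = (\<Sum>k<d. \<Sum>m<d. A i k * B k m * x m)"
    by (simp add: mat_vec_def sum_distrib_left mult.assoc)
  also have "\<dots> = (\<Sum>m<d. \<Sum>k<d. A i k * B k m * x m)"
    by (rule sum.swap)
  finally show ?thesis
    by (simp add: mat_vec_def mat_mul_def sum_distrib_right)
qed

lemma bdd_above_spec_norm_set:
  fixes A :: "nat \<Rightarrow> nat \<Rightarrow> real"
  shows "bdd_above {sqrt (\<Sum>i<r. (\<Sum>j<c. A i j * x j)^2) | x. (\<Sum>j<c. (x j)^2) \<le> (1::real)}"
proof (rule bdd_aboveI)
  fix z assume "z \<in> {sqrt (\<Sum>i<r. (\<Sum>j<c. A i j * x j)^2) | x. (\<Sum>j<c. (x j)^2) \<le> (1::real)}"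
  then obtain x where z: "z = sqrt (\<Sum>i<r. (\<Sum>j<c. A i j * x j)^2)"
    and x: "(\<Sum>j<c. (x j)^2) \<le> 1" by blast
  have "\<bar>x j\<bar> \<le> 1" if "j < c" for j
  proof -
    have "(x j)^2 \<le> (\<Sum>j<c. (x j)^2)"
      using that by (intro member_le_sum) auto
    then show ?thesis
      using x abs_square_le_1 by fastforce
  qed
  then have "\<bar>\<Sum>j<c. A i j * x j\<bar> \<le> (\<Sum>j<c. \<bar>A i j\<bar>)" for i
    by (intro order_trans[OF sum_abs] sum_mono) (auto simp: abs_mult intro: mult_left_le)
  then have "(\<Sum>j<c. A i j * x j)^2 \<le> (\<Sum>j<c. \<bar>A i j\<bar>)^2" for i
    by (metis abs_ge_zero power2_abs power_mono)
  then show "z \<le> sqrt (\<Sum>i<r. (\<Sum>j<c. \<bar>A i j\<bar>)^2)"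
    unfolding z by (intro real_sqrt_le_mono sum_mono)
qed

lemma sum_sq_mat_vec_le_spec_norm:
  "(\<Sum>i<r. (mat_vec c A x i)^2) \<le> (spec_norm r c A)^2 * (\<Sum>j<c. (x j)^2)"
proof (cases "(\<Sum>j<c. (x j)^2) = 0")
  case True
  then have "\<forall>j<c. x j = 0"
    by (simp add: sum_nonneg_eq_0_iff)
  then show ?thesis
    using True by (simp add: mat_vec_def)
next
  case False
  define s where "s = (\<Sum>j<c. (x j)^2)"
  have s: "s > 0"
    using False unfolding s_def by (simp add: less_le sum_nonneg)
  define y where "y j = x j / sqrt s" for j
  have "(\<Sum>j<c. (y j)^2) = 1"
    using s by (simp add: y_def power_divide s_def flip: sum_divide_distrib)
  then have "sqrt (\<Sum>i<r. (\<Sum>j<c. A i j * y j)^2) \<le> spec_norm r c A"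
    unfolding spec_norm_def by (intro cSup_upper[OF _ bdd_above_spec_norm_set]) auto
  moreover have "(\<Sum>i<r. (\<Sum>j<c. A i j * y j)^2) = (\<Sum>i<r. (mat_vec c A x i)^2) / s"
    using s by (simp add: y_def mat_vec_def power_divide flip: sum_divide_distrib)
  ultimately have "sqrt ((\<Sum>i<r. (mat_vec c A x i)^2) / s) \<le> spec_norm r c A"
    by simp
  then have "(\<Sum>i<r. (mat_vec c A x i)^2) / s \<le> (spec_norm r c A)^2"
    by (rule sqrt_le_D)
  then show ?thesis
    using s by (simp add: s_def pos_divide_le_eq)
qed

lemma sum_consecutive_blocks:
  fixes b :: "nat \<Rightarrow> nat"
  assumes "\<And>i j. i \<le> j \<Longrightarrow> j \<le> m \<Longrightarrow> b i \<le> b j"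
  shows "(\<Sum>i<m. \<Sum>k\<in>{b i..<b (Suc i)}. h k) = (\<Sum>k\<in>{b 0..<b m}. h k)"
  using assms
proof (induction m)
  case (Suc m)
  then show ?case
    by (simp add: sum.atLeastLessThan_concat)
qed simp

lemma unit_lower_triangular_prefix_zero:
  assumes diag: "\<And>r. r < m \<Longrightarrow> L r r = 1"
    and upper: "\<And>r k. r < k \<Longrightarrow> k < d \<Longrightarrow> L r k = 0"
    and "m \<le> d"
    and kernel: "\<And>r. r < m \<Longrightarrow> mat_vec d L x r = 0"
    and "r < m"
  shows "x r = 0"
  using \<open>r < m\<close>
proof (induction r rule: less_induct)
  case (less r)
  have "mat_vec d L x r = L r r * x r + (\<Sum>k\<in>{..<d} - {r}. L r k * x k)"
    using less.prems \<open>m \<le> d\<close> by (simp add: mat_vec_def sum.remove[of _ r])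
  also have "(\<Sum>k\<in>{..<d} - {r}. L r k * x k) = 0"
  proof (intro sum.neutral ballI)
    fix k assume "k \<in> {..<d} - {r}"
    then show "L r k * x k = 0"
      using less upper by (cases "k < r") auto
  qed
  finally show ?case
    using kernel[OF less.prems] diag[OF less.prems] by simp
qed

lemma ex_block_containing:
  assumes "n 0 = 0" "i < n m"
  shows "\<exists>b<m. in_block n b i"
  using assms(2)
proof (induction m)
  case (Suc m)
  then show ?case
    by (cases "i < n m") (auto simp: in_block_def intro: less_SucI)
qed (simp add: assms(1))

lemma in_block_mono:
  assumes "\<And>a b. a \<le> b \<Longrightarrow> b \<le> m \<Longrightarrow> n a \<le> n b"
    and "in_block n bi i" "in_block n bj j" "i \<le> j" "bi \<le> m"
  shows "bi \<le> bj"
proof (rule ccontr)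
  assume "\<not> bi \<le> bj"
  then have "n (Suc bj) \<le> n bi"
    using assms(1,5) by simp
  then show False
    using assms(2-4) by (simp add: in_block_def)
qed

locale block_LU =
  fixes n :: "nat \<Rightarrow> nat" and K :: nat and L U Uinv :: "nat \<Rightarrow> nat \<Rightarrow> real"
  assumes n_0: "n 0 = 0"
    and n_mono: "\<And>a b. a \<le> b \<Longrightarrow> b \<le> Suc K \<Longrightarrow> n a \<le> n b"
    and L_lower: "block_lower_unit n (Suc K) L"
    and U_upper: "block_upper n (Suc K) U"
    and Uinv_left: "\<And>r t. r < n (Suc K) \<Longrightarrow> t < n (Suc K) \<Longrightarrow>
      mat_mul (n (Suc K)) Uinv U r t = (if r = t then 1 else 0)"
begin

abbreviation "d \<equiv> n (Suc K)"

lemma obtain_block_le: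
  assumes "i < d"
  obtains b where "b \<le> K" "in_block n b i"
  using ex_block_containing[OF n_0 assms] by (metis less_Suc_eq_le)

lemma L_diag: "r < d \<Longrightarrow> L r r = 1"
proof (elim obtain_block_le)
  fix b assume "b \<le> K" "in_block n b r"
  then show "L r r = 1"
    using L_lower[unfolded block_lower_unit_def, rule_format, of b b r r] by simp
qed

lemma L_above_diag:
  assumes "r < k" "k < d"
  shows "L r k = 0"
proof -
  obtain br bk where "br \<le> K" "in_block n br r" "bk \<le> K" "in_block n bk k"
    using assms by (metis obtain_block_le order.strict_trans)
  moreover from this have "br \<le> bk"
    using assms in_block_mono[of "Suc K" n br r bk k, OF n_mono] by simp
  ultimately show ?thesis
    using L_lower[unfolded block_lower_unit_def, rule_format, of br bk r k] assms by auto
qed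

lemma U_below_blocks:
  assumes "j \<le> K" "n (Suc j) \<le> i" "i < d" "k < n (Suc j)"
  shows "U i k = 0"
proof -
  have "k < d"
    using assms n_mono[of "Suc j" "Suc K"] by simp
  then obtain bi bk where bi: "bi \<le> K" "in_block n bi i" and bk: "bk \<le> K" "in_block n bk k"
    using assms by (metis obtain_block_le)
  have "bk \<le> j"
    using bk assms n_mono[of "Suc j" bk] by (force simp: in_block_def)
  moreover have "Suc j \<le> bi"
    using bi assms n_mono[of "Suc bi" "Suc j"] by (force simp: in_block_def)
  ultimately show ?thesis
    using U_upper[unfolded block_upper_def, rule_format, of bi bk i k] bi bk by simp
qed

lemma Max_sq_block_col_norm_nonneg:
  assumes "0 < K"
  shows "0 \<le> Max ((\<lambda>k. (block_col_norm n d Uinv k)^2) ` {1..K})"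
  using assms by (intro order_trans[OF zero_le_power2 Max_ge[of _ "(block_col_norm n d Uinv 1)^2"]]) auto

text \<open>\<open>P j\<close> is the coefficient vector of the \<open>j\<close>-th Galerkin solution, \<open>F\<close> the load vector.\<close>

context
  fixes P :: "nat \<Rightarrow> nat \<Rightarrow> real" and F :: "nat \<Rightarrow> real"
  assumes P_support: "\<And>j i. j \<le> K \<Longrightarrow> n (Suc j) \<le> i \<Longrightarrow> i < d \<Longrightarrow> P j i = 0"
    and P_galerkin: "\<And>j r. j \<le> K \<Longrightarrow> r < n (Suc j) \<Longrightarrow> mat_vec d (mat_mul d L U) (P j) r = F r"
begin

lemma U_coeff_eq_truncation:
  assumes "j \<le> K" "k < d"
  shows "mat_vec d U (P j) k = (if k < n (Suc j) then mat_vec d U (P K) k else 0)"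
proof (cases "k < n (Suc j)")
  case True
  have n_le: "n (Suc j) \<le> d"
    using assms n_mono by simp
  have kernel: "mat_vec d L (\<lambda>k. mat_vec d U (P j) k - mat_vec d U (P K) k) r = 0"
    if "r < n (Suc j)" for r
    using that assms n_le P_galerkin[of j r] P_galerkin[of K r]
    by (simp add: mat_vec_diff mat_vec_mat_mul)
  have "mat_vec d U (P j) k - mat_vec d U (P K) k = 0"
    using unit_lower_triangular_prefix_zero[of "n (Suc j)" L d
        "\<lambda>k. mat_vec d U (P j) k - mat_vec d U (P K) k" k] n_le L_diag L_above_diag kernel True
    by simp
  then show ?thesis
    using True by simp
next
  case False
  have "U k m * P j m = 0" if "m < d" for m
    using that False assms U_below_blocks[of j k m] P_support[of j m] by (cases "m < n (Suc j)") auto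
  then have "mat_vec d U (P j) k = 0"
    unfolding mat_vec_def by (intro sum.neutral) blast
  then show ?thesis
    using False by simp
qed

lemma coeff_eq_Uinv_truncation:
  assumes "j \<le> K" "i < d"
  shows "P j i = mat_vec d Uinv (\<lambda>k. if k < n (Suc j) then mat_vec d U (P K) k else 0) i"
proof -
  have "mat_vec d (mat_mul d Uinv U) (P j) i = (\<Sum>m<d. if i = m then P j m else 0)"
    unfolding mat_vec_def using assms by (intro sum.cong) (auto simp: Uinv_left)
  then have "P j i = mat_vec d (mat_mul d Uinv U) (P j) i"
    using assms by simp
  also have "\<dots> = mat_vec d Uinv (mat_vec d U (P j)) i"
    by (simp add: mat_vec_mat_mul)
  also have "\<dots> = mat_vec d Uinv (\<lambda>k. if k < n (Suc j) then mat_vec d U (P K) k else 0) i"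
    unfolding mat_vec_def[of d Uinv] using assms by (intro sum.cong refl) (simp add: U_coeff_eq_truncation)
  finally show ?thesis .
qed

lemma coeff_increment_eq_block_column:
  assumes "j < K" "r < d"
  shows "P (Suc j) r - P j r = mat_vec (n (Suc (Suc j)) - n (Suc j)) (\<lambda>i t. Uinv i (n (Suc j) + t))
    (\<lambda>t. mat_vec d U (P K) (n (Suc j) + t)) r"
proof -
  let ?g = "mat_vec d U (P K)"
  have blocks: "n (Suc j) \<le> n (Suc (Suc j))" "n (Suc (Suc j)) \<le> d"
    using assms n_mono by auto
  have "P (Suc j) r - P j r
      = mat_vec d Uinv (\<lambda>k. if k \<in> {n (Suc j)..<n (Suc (Suc j))} then ?g k else 0) r"
    using assms blocks
    by (simp add: coeff_eq_Uinv_truncation mat_vec_def flip: sum_subtractf right_diff_distrib)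
      (rule sum.cong; auto)
  also have "\<dots> = (\<Sum>k\<in>{n (Suc j)..<n (Suc (Suc j))}. Uinv r k * ?g k)"
  proof -
    have "{..<d} \<inter> {n (Suc j)..<n (Suc (Suc j))} = {n (Suc j)..<n (Suc (Suc j))}"
      using blocks by auto
    then show ?thesis
      unfolding mat_vec_def[of d Uinv]
      using sum.inter_restrict[of "{..<d}" "\<lambda>k. Uinv r k * ?g k" "{n (Suc j)..<n (Suc (Suc j))}"]
      by (simp add: if_distrib cong: if_cong)
  qed
  also have "\<dots> = mat_vec (n (Suc (Suc j)) - n (Suc j)) (\<lambda>i t. Uinv i (n (Suc j) + t))
      (\<lambda>t. ?g (n (Suc j) + t)) r"
    using blocks by (simp add: sum.atLeastLessThan_shift_0 mat_vec_def atLeast0LessThan)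
  finally show ?thesis .
qed

lemma sum_sq_increment_le:
  assumes "j < K"
  shows "(\<Sum>r<d. (P (Suc j) r - P j r)^2)
    \<le> (block_col_norm n d Uinv (Suc j))^2 * (\<Sum>k\<in>{n (Suc j)..<n (Suc (Suc j))}. (mat_vec d U (P K) k)^2)"
proof -
  have "n (Suc j) \<le> n (Suc (Suc j))"
    using assms n_mono by simp
  then have "(\<Sum>k\<in>{n (Suc j)..<n (Suc (Suc j))}. (mat_vec d U (P K) k)^2)
      = (\<Sum>t<n (Suc (Suc j)) - n (Suc j). (mat_vec d U (P K) (n (Suc j) + t))^2)"
    by (simp add: sum.atLeastLessThan_shift_0 atLeast0LessThan)
  then show ?thesis
    using assms sum_sq_mat_vec_le_spec_norm
    by (simp add: coeff_increment_eq_block_column block_col_norm_def)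
qed

lemma sum_sq_U_tail_le:
  "(\<Sum>k\<in>{n 1..<d}. (mat_vec d U (P K) k)^2) \<le> (spec_norm d d U)^2 * (\<Sum>r<d. (P K r - P 0 r)^2)"
proof -
  have "mat_vec d U (P K) k = mat_vec d U (\<lambda>r. P K r - P 0 r) k" if "k \<in> {n 1..<d}" for k
    using that U_coeff_eq_truncation[of 0 k] by (simp add: mat_vec_diff)
  then have "(\<Sum>k\<in>{n 1..<d}. (mat_vec d U (P K) k)^2)
      = (\<Sum>k\<in>{n 1..<d}. (mat_vec d U (\<lambda>r. P K r - P 0 r) k)^2)"
    by simp
  also have "\<dots> \<le> (\<Sum>k<d. (mat_vec d U (\<lambda>r. P K r - P 0 r) k)^2)"
    by (intro sum_mono2) auto
  also have "\<dots> \<le> (spec_norm d d U)^2 * (\<Sum>r<d. (P K r - P 0 r)^2)"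
    by (rule sum_sq_mat_vec_le_spec_norm)
  finally show ?thesis .
qed

theorem sum_sq_increments_le:
  assumes "0 < K"
  shows "(\<Sum>j<K. \<Sum>r<d. (P (Suc j) r - P j r)^2)
    \<le> (spec_norm d d U)^2 * Max ((\<lambda>k. (block_col_norm n d Uinv k)^2) ` {1..K})
      * (\<Sum>r<d. (P K r - P 0 r)^2)"
proof -
  define \<mu> where "\<mu> = Max ((\<lambda>k. (block_col_norm n d Uinv k)^2) ` {1..K})"
  have \<mu>: "(block_col_norm n d Uinv (Suc j))^2 \<le> \<mu>" if "j < K" for j
    using that unfolding \<mu>_def by (intro Max_ge) auto
  have "0 \<le> \<mu>"
    using Max_sq_block_col_norm_nonneg[OF assms] by (simp add: \<mu>_def)
  have "(\<Sum>r<d. (P (Suc j) r - P j r)^2)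
      \<le> \<mu> * (\<Sum>k\<in>{n (Suc j)..<n (Suc (Suc j))}. (mat_vec d U (P K) k)^2)" if "j < K" for j
    using sum_sq_increment_le[OF that] mult_right_mono[OF \<mu>[OF that]]
    by (meson order_trans sum_nonneg zero_le_power2)
  then have "(\<Sum>j<K. \<Sum>r<d. (P (Suc j) r - P j r)^2)
      \<le> \<mu> * (\<Sum>j<K. \<Sum>k\<in>{n (Suc j)..<n (Suc (Suc j))}. (mat_vec d U (P K) k)^2)"
    unfolding sum_distrib_left by (rule sum_mono) simp
  also have "(\<Sum>j<K. \<Sum>k\<in>{n (Suc j)..<n (Suc (Suc j))}. (mat_vec d U (P K) k)^2)
      = (\<Sum>k\<in>{n 1..<d}. (mat_vec d U (P K) k)^2)"
    using sum_consecutive_blocks[of K "\<lambda>i. n (Suc i)"] n_mono by simp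
  also have "\<mu> * \<dots> \<le> \<mu> * ((spec_norm d d U)^2 * (\<Sum>r<d. (P K r - P 0 r)^2))"
    using sum_sq_U_tail_le \<open>0 \<le> \<mu>\<close> by (rule mult_left_mono)
  finally show ?thesis
    by (simp add: \<mu>_def mult_ac)
qed

end

end

section \<open>Orthonormal families and nested bases\<close>

definition orthonormal_family :: "(nat \<Rightarrow> 'a::real_inner) \<Rightarrow> nat set \<Rightarrow> bool" where
  "orthonormal_family w I \<longleftrightarrow> (\<forall>i\<in>I. \<forall>k\<in>I. inner (w i) (w k) = (if i = k then 1 else 0))"

lemma orthonormal_family_subset:
  "orthonormal_family w I \<Longrightarrow> J \<subseteq> I \<Longrightarrow> orthonormal_family w J"
  unfolding orthonormal_family_def by blast

lemma orthonormal_family_independent: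
  assumes "orthonormal_family w I"
  shows "inj_on w I" "independent (w ` I)"
proof -
  have unit: "inner (w i) (w i) = 1" if "i \<in> I" for i
    using assms that by (simp add: orthonormal_family_def)
  show "inj_on w I"
  proof (rule inj_onI, rule ccontr)
    fix i k assume "i \<in> I" "k \<in> I" "w i = w k" "i \<noteq> k"
    then have "inner (w i) (w k) = 0"
      using assms unfolding orthonormal_family_def by (metis (full_types))
    with unit[OF \<open>i \<in> I\<close>] \<open>w i = w k\<close> show False
      by simp
  qed
  have "0 \<notin> w ` I"
    using unit by force
  moreover have "pairwise orthogonal (w ` I)"
    using assms by (auto simp: pairwise_def orthogonal_def orthonormal_family_def)
  ultimately show "independent (w ` I)"
    by (intro pairwise_orthogonal_independent)
qed

lemma inner_sum_orthonormal:
  assumes "orthonormal_family w I" "finite I" "k \<in> I"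
  shows "inner (\<Sum>i\<in>I. c i *\<^sub>R w i) (w k) = c k"
proof -
  have "inner (\<Sum>i\<in>I. c i *\<^sub>R w i) (w k) = (\<Sum>i\<in>I. c i * inner (w i) (w k))"
    by (simp add: inner_sum_left)
  also have "\<dots> = (\<Sum>i\<in>I. if i = k then c i else 0)"
    using assms by (intro sum.cong refl) (simp add: orthonormal_family_def)
  finally show ?thesis
    using assms by simp
qed

lemma norm_sum_orthonormal:
  assumes "orthonormal_family w I" "finite I"
  shows "(norm (\<Sum>i\<in>I. c i *\<^sub>R w i))^2 = (\<Sum>i\<in>I. (c i)^2)"
proof -
  have "(norm (\<Sum>i\<in>I. c i *\<^sub>R w i))^2 = (\<Sum>k\<in>I. c k * inner (\<Sum>i\<in>I. c i *\<^sub>R w i) (w k))"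
    by (simp add: power2_norm_eq_inner inner_sum_right)
  also have "\<dots> = (\<Sum>k\<in>I. (c k)^2)"
    using inner_sum_orthonormal[OF assms] by (simp add: power2_eq_square)
  finally show ?thesis .
qed

lemma orthonormal_expansion:
  assumes "orthonormal_family w I" "finite I" "x \<in> span (w ` I)"
  shows "x = (\<Sum>i\<in>I. inner x (w i) *\<^sub>R w i)"
proof -
  obtain c where "x = (\<Sum>v\<in>w ` I. c v *\<^sub>R v)"
    using assms(2,3) span_finite[of "w ` I"] by auto
  then have x: "x = (\<Sum>i\<in>I. c (w i) *\<^sub>R w i)"
    using sum.reindex[OF orthonormal_family_independent(1)[OF assms(1)]] by simp
  then have "inner x (w k) = c (w k)" if "k \<in> I" for k
    using inner_sum_orthonormal[OF assms(1,2) that] by simp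
  then show ?thesis
    using x by simp
qed

lemma finite_span_basis:
  fixes B :: "'a::real_vector set"
  assumes "finite B"
  obtains C where "finite C" "independent C" "span C = span B" "card C = dim (span B)"
proof -
  obtain C where C: "C \<subseteq> span B" "independent C" "span B \<subseteq> span C" "card C = dim (span B)"
    by (rule basis_exists)
  have "finite C"
    using independent_span_bound[OF assms C(2,1)] by simp
  moreover have "span C = span B"
    using C(1,3) span_superset[of B] by (auto simp: span_eq)
  ultimately show ?thesis
    using C(2,4) that by blast
qed

lemma independent_card_le_dim_span:
  fixes A B :: "'a::real_vector set"
  assumes "finite B" "independent A" "A \<subseteq> span B"
  shows "finite A \<and> card A \<le> dim (span B)"
proof -
  obtain C where "finite C" "span C = span B" "card C = dim (span B)"
    using finite_span_basis[OF assms(1)] by metis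
  then show ?thesis
    using independent_span_bound[of C A] assms by simp
qed

lemma dim_le_dim_span:
  fixes S B :: "'a::real_vector set"
  assumes "finite B" "S \<subseteq> span B"
  shows "dim S \<le> dim (span B)"
proof -
  obtain C where "finite C" "span C = span B" "card C = dim (span B)"
    using finite_span_basis[OF assms(1)] by metis
  then show ?thesis
    using dim_le_card[of S C] assms by simp
qed

locale nested_basis =
  fixes Xs :: "nat \<Rightarrow> 'a::real_inner set" and l N :: nat and w :: "nat \<Rightarrow> 'a"
  assumes fin_dim: "\<And>k. k \<le> N + 1 \<Longrightarrow> fin_dim_subspace (Xs (l + k))"
    and nested: "\<And>k. k \<le> N \<Longrightarrow> Xs (l + k) \<subseteq> Xs (l + Suc k)"
    and onb: "nested_onb Xs l N w"
begin

abbreviation "n \<equiv> blk_bd Xs l"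

lemma n_0: "n 0 = 0"
  by (simp add: blk_bd_def)

lemma n_Suc: "n (Suc j) = dim (Xs (l + j))"
  by (simp add: blk_bd_def)

lemma obtain_spanning_set:
  assumes "k \<le> N + 1"
  obtains B where "finite B" "Xs (l + k) = span B"
  using fin_dim[OF assms] unfolding fin_dim_subspace_def by metis

lemma Xs_mono: "a \<le> b \<Longrightarrow> b \<le> N + 1 \<Longrightarrow> Xs (l + a) \<subseteq> Xs (l + b)"
proof (induction b)
  case (Suc b)
  then show ?case
    using nested[of b] by (cases "a = Suc b") auto
qed simp

lemma n_mono:
  assumes "a \<le> b" "b \<le> N + 2"
  shows "n a \<le> n b"
proof (cases a)
  case (Suc a')
  then obtain b' where b': "b = Suc b'"
    using assms by (cases b) auto
  obtain B where "finite B" "Xs (l + b') = span B"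
    using obtain_spanning_set[of b'] assms b' by auto
  then show ?thesis
    using dim_le_dim_span[of B "Xs (l + a')"] Xs_mono[of a' b'] assms Suc b' by (simp add: n_Suc)
qed (simp add: n_0)

lemma block_onb: "b \<le> N + 1 \<Longrightarrow> is_onb w {n b..<n (Suc b)} (blk_space Xs l b)"
  using onb by (simp add: nested_onb_def)

lemma block_mem:
  assumes "b \<le> N + 1" "in_block n b i"
  shows "w i \<in> Xs (l + b)"
  using block_onb[OF assms(1)] assms(2)
  by (auto simp: is_onb_def in_block_def blk_space_def split: if_splits)

lemma w_mem:
  assumes "j \<le> N + 1" "i < n (Suc j)"
  shows "w i \<in> Xs (l + j)"
proof -
  obtain b where "b < Suc j" "in_block n b i"
    using ex_block_containing[OF n_0 assms(2)] by blast
  then show ?thesis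
    using block_mem Xs_mono[of b j] assms(1) by auto
qed

lemma orthonormal: "orthonormal_family w {..<n (N + 2)}"
proof -
  have "inner (w i) (w k) = (if i = k then 1 else 0)" if ik: "i \<le> k" "k < n (N + 2)" for i k
  proof -
    have "i < n (N + 2)"
      using ik by linarith
    then obtain bi where bi: "bi < N + 2" "in_block n bi i"
      using ex_block_containing[of n i "N + 2", OF n_0] by auto
    obtain bk where bk: "bk < N + 2" "in_block n bk k"
      using ex_block_containing[of n k "N + 2", OF n_0] ik by auto
    have "bi \<le> bk"
      using in_block_mono[of "N + 2" n bi i bk k, OF n_mono] bi bk ik by simp
    show ?thesis
    proof (cases "bi = bk")
      case True
      then have "i \<in> {n bi..<n (Suc bi)}" "k \<in> {n bi..<n (Suc bi)}"
        using bi bk by (simp_all add: in_block_def)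
      then show ?thesis
        using block_onb[of bi] bi unfolding is_onb_def by simp
    next
      case False
      then have "bi \<le> bk - 1" "bk - 1 \<le> N + 1" "bi \<le> N + 1"
        using \<open>bi \<le> bk\<close> bk by auto
      then have "w i \<in> Xs (l + (bk - 1))"
        using block_mem[of bi i] Xs_mono[of bi "bk - 1"] bi by blast
      then have "w i \<in> Xs (l + bk - 1)"
        using \<open>bi \<le> bk - 1\<close> False by (simp add: Nat.add_diff_assoc)
      moreover have "w k \<in> blk_space Xs l bk"
        using block_onb[of bk] bk by (auto simp: is_onb_def in_block_def)
      moreover have "n (Suc bi) \<le> n bk"
        using n_mono[of "Suc bi" bk] False \<open>bi \<le> bk\<close> bk by simp
      ultimately show ?thesis
        using False \<open>bi \<le> bk\<close> bi bk by (auto simp: blk_space_def in_block_def inner_commute)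
    qed
  qed
  then show ?thesis
    unfolding orthonormal_family_def by (metis inner_commute lessThan_iff nat_le_linear)
qed

lemma span_eq:
  assumes j: "j \<le> N + 1"
  shows "Xs (l + j) = span (w ` {..<n (Suc j)})"
proof -
  let ?W = "w ` {..<n (Suc j)}"
  obtain B where B: "finite B" "Xs (l + j) = span B"
    using obtain_spanning_set[OF j] by blast
  have W_sub: "?W \<subseteq> Xs (l + j)"
    using w_mem[OF j] by auto
  have on: "orthonormal_family w {..<n (Suc j)}"
    by (rule orthonormal_family_subset[OF orthonormal]) (use n_mono[of "Suc j" "N + 2"] j in auto)
  have "x \<in> span ?W" if x: "x \<in> Xs (l + j)" for x
  proof (rule ccontr)
    assume x_out: "x \<notin> span ?W"
    have indep: "independent (insert x ?W)"
      by (rule independent_insertI[OF x_out orthonormal_family_independent(2)[OF on]])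
    have "insert x ?W \<subseteq> span B"
      using x W_sub unfolding B(2) by blast
    then have "card (insert x ?W) \<le> dim (Xs (l + j))"
      using independent_card_le_dim_span[OF B(1) indep] B(2) by simp
    moreover have "x \<notin> ?W"
      using x_out span_base[of x ?W] by blast
    ultimately have "Suc (card ?W) \<le> dim (Xs (l + j))"
      by simp
    then show False
      using card_image[OF orthonormal_family_independent(1)[OF on]] by (simp add: n_Suc)
  qed
  moreover have "span ?W \<subseteq> Xs (l + j)"
    using span_mono[OF W_sub] unfolding B(2) span_span .
  ultimately show ?thesis
    by blast
qed

lemma expansion:
  assumes "x \<in> Xs (l + (N + 1))"
  shows "x = (\<Sum>i<n (N + 2). inner x (w i) *\<^sub>R w i)"
  using orthonormal_expansion[OF orthonormal] span_eq[of "N + 1"] assms by simp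

lemma norm_sq_eq_sum_coefficients:
  assumes "x \<in> Xs (l + (N + 1))"
  shows "(norm x)^2 = (\<Sum>i<n (N + 2). (inner x (w i))^2)"
  using norm_sum_orthonormal[OF orthonormal] expansion[OF assms] by (metis finite_lessThan)

lemma coefficient_beyond_level:
  assumes "j \<le> N + 1" "x \<in> Xs (l + j)" "n (Suc j) \<le> i" "i < n (N + 2)"
  shows "inner x (w i) = 0"
proof -
  have "orthogonal (w i) (w k)" if "k < n (Suc j)" for k
    using orthonormal n_mono[of "Suc j" "N + 2"] assms that
    by (auto simp: orthonormal_family_def orthogonal_def)
  then have "orthogonal (w i) x"
    using orthogonal_to_span[of x "w ` {..<n (Suc j)}" "w i"] span_eq assms(1,2) by auto
  then show ?thesis
    by (simp add: orthogonal_def inner_commute)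
qed

lemma nontrivial_iff:
  assumes "j \<le> N + 1"
  shows "Xs (l + j) - {0} \<noteq> {} \<longleftrightarrow> 0 < n (Suc j)"
proof
  assume "Xs (l + j) - {0} \<noteq> {}"
  then show "0 < n (Suc j)"
    using span_eq[OF assms] by (cases "n (Suc j)") auto
next
  assume pos: "0 < n (Suc j)"
  then have "0 < n (N + 2)"
    using n_mono[of "Suc j" "N + 2"] assms by simp
  then have "inner (w 0) (w 0) = 1"
    using orthonormal unfolding orthonormal_family_def by simp
  then have "w 0 \<noteq> 0"
    by auto
  then show "Xs (l + j) - {0} \<noteq> {}"
    using w_mem[OF assms pos] by blast
qed

end

section \<open>Nested Petrov-Galerkin approximations\<close>

lemma inf_sup_norm_le:
  fixes a :: "'x::real_normed_vector \<Rightarrow> 'y::real_normed_vector \<Rightarrow> real"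
  assumes bound: "\<And>w v. \<bar>a w v\<bar> \<le> C * norm w * norm v"
    and "\<gamma> > 0" "w \<noteq> 0" "Y - {0} \<noteq> {}"
    and inf_sup: "(SUP v\<in>Y - {0}. a w v / (norm w * norm v)) \<ge> \<gamma>"
    and same_action: "\<And>v. v \<in> Y \<Longrightarrow> a w v = a e v"
  shows "norm w \<le> C / \<gamma> * norm e"
proof -
  have "(SUP v\<in>Y - {0}. a w v / (norm w * norm v)) \<le> C * norm e / norm w"
  proof (rule cSUP_least[OF \<open>Y - {0} \<noteq> {}\<close>])
    fix v assume v: "v \<in> Y - {0}"
    then have "a w v \<le> C * norm e * norm v"
      using same_action[of v] bound[of e v] by simp
    then have "a w v / (norm w * norm v) \<le> C * norm e * norm v / (norm w * norm v)"
      by (rule divide_right_mono) simp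
    then show "a w v / (norm w * norm v) \<le> C * norm e / norm w"
      using v by simp
  qed
  then have "\<gamma> \<le> C * norm e / norm w"
    using inf_sup by linarith
  then have "\<gamma> * norm w \<le> C * norm e"
    using \<open>w \<noteq> 0\<close> by (simp add: pos_le_divide_eq)
  then have "norm w \<le> C * norm e / \<gamma>"
    using \<open>\<gamma> > 0\<close> by (simp add: pos_le_divide_eq mult.commute)
  then show ?thesis
    by simp
qed

locale nested_petrov_galerkin =
  X: nested_basis Xs l N wX + Y: nested_basis Ys l N wY
  for Xs :: "nat \<Rightarrow> 'x::real_inner set" and Ys :: "nat \<Rightarrow> 'y::real_inner set" and l N wX wY +
  fixes a :: "'x \<Rightarrow> 'y \<Rightarrow> real" and f :: "'y \<Rightarrow> real" and us :: "nat \<Rightarrow> 'x"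
  assumes bilinear: "bilinear a"
    and dims: "\<And>k. k \<le> N + 1 \<Longrightarrow> dim (Xs (l + k)) = dim (Ys (l + k))"
    and us_in: "\<And>k. k \<le> N + 1 \<Longrightarrow> us (l + k) \<in> Xs (l + k)"
    and us_sol: "\<And>k v. k \<le> N + 1 \<Longrightarrow> v \<in> Ys (l + k) \<Longrightarrow> a (us (l + k)) v = f v"
begin

definition coeff :: "nat \<Rightarrow> nat \<Rightarrow> real" where
  "coeff j i = inner (us (l + j)) (wX i)"

lemma us_in_top: "j \<le> N + 1 \<Longrightarrow> us (l + j) \<in> Xs (l + (N + 1))"
  using us_in X.Xs_mono[of j "N + 1"] by auto

lemma coeff_support: "j \<le> N + 1 \<Longrightarrow> X.n (Suc j) \<le> i \<Longrightarrow> i < X.n (N + 2) \<Longrightarrow> coeff j i = 0"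
  unfolding coeff_def by (rule X.coefficient_beyond_level[OF _ us_in])

lemma sq_norm_diff_eq_coeff:
  assumes "j \<le> N + 1" "j' \<le> N + 1"
  shows "(norm (us (l + j) - us (l + j')))^2 = (\<Sum>i<X.n (N + 2). (coeff j i - coeff j' i)^2)"
proof -
  have "us (l + j) - us (l + j') \<in> Xs (l + (N + 1))"
    using X.fin_dim[of "N + 1"] us_in_top assms by (simp add: fin_dim_subspace_def subspace_diff)
  then show ?thesis
    by (simp add: X.norm_sq_eq_sum_coefficients coeff_def inner_diff_left)
qed

lemma coeff_galerkin:
  assumes M: "\<And>r t. r < X.n (N + 2) \<Longrightarrow> t < X.n (N + 2) \<Longrightarrow> M r t = a (wX t) (wY r)"
    and "j \<le> N + 1" "r < X.n (Suc j)"
  shows "mat_vec (X.n (N + 2)) M (coeff j) r = f (wY r)"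
proof -
  have "wY r \<in> Ys (l + j)"
    using Y.w_mem assms(2,3) dims by (simp add: blk_bd_def)
  then have "f (wY r) = a (us (l + j)) (wY r)"
    using us_sol assms(2) by simp
  also have "\<dots> = a (\<Sum>i<X.n (N + 2). coeff j i *\<^sub>R wX i) (wY r)"
    using X.expansion[OF us_in_top[OF assms(2)]] by (simp add: coeff_def)
  also have "\<dots> = (\<Sum>i<X.n (N + 2). a (wX i) (wY r) * coeff j i)"
  proof -
    have "linear (\<lambda>x. a x (wY r))"
      using bilinear by (simp add: bilinear_def)
    then show ?thesis
      by (simp add: linear_sum[of "\<lambda>x. a x (wY r)"] linear_scale[of "\<lambda>x. a x (wY r)"] o_def mult.commute)
  qed
  also have "\<dots> = mat_vec (X.n (N + 2)) M (coeff j) r"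
  proof -
    have "r < X.n (N + 2)"
      using assms(2,3) X.n_mono[of "Suc j" "N + 2"] by simp
    then show ?thesis
      unfolding mat_vec_def using M by (intro sum.cong refl) simp
  qed
  finally show ?thesis ..
qed

lemma sum_sq_level_increments_eq_coeff:
  "(\<Sum>k=l..l+N. (norm (us (k + 1) - us k))^2)
    = (\<Sum>j<N + 1. \<Sum>r<X.n (N + 2). (coeff (Suc j) r - coeff j r)^2)"
proof -
  have "(\<Sum>k=l..l+N. (norm (us (k + 1) - us k))^2) = (\<Sum>j=0..N. (norm (us (j + l + 1) - us (j + l)))^2)"
    using sum.shift_bounds_cl_nat_ivl[of "\<lambda>k. (norm (us (k + 1) - us k))^2" 0 l N]
    by (simp only: add_0 add.commute)
  also have "\<dots> = (\<Sum>j<N + 1. (norm (us (l + Suc j) - us (l + j)))^2)"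
    unfolding atLeast0AtMost lessThan_Suc_atMost[symmetric] by (simp add: add.commute)
  also have "\<dots> = (\<Sum>j<N + 1. \<Sum>r<X.n (N + 2). (coeff (Suc j) r - coeff j r)^2)"
  proof (rule sum.cong[OF refl])
    fix j assume "j \<in> {..<N + 1}"
    then show "(norm (us (l + Suc j) - us (l + j)))^2 = (\<Sum>r<X.n (N + 2). (coeff (Suc j) r - coeff j r)^2)"
      using sq_norm_diff_eq_coeff[of "Suc j" j] by simp
  qed
  finally show ?thesis .
qed

lemma sq_norm_top_increment_le:
  assumes bound: "\<And>w v. \<bar>a w v\<bar> \<le> C * norm w * norm v" and "\<gamma> > 0"
    and inf_sup: "\<And>w. w \<in> Xs (l + (N + 1)) \<Longrightarrow> w \<noteq> 0 \<Longrightarrow>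
      (SUP v\<in>Ys (l + (N + 1)) - {0}. a w v / (norm w * norm v)) \<ge> \<gamma>"
    and u_sol: "\<And>v. v \<in> Ys (l + (N + 1)) \<Longrightarrow> a u v = f v"
  shows "(norm (us (l + (N + 1)) - us l))^2 \<le> (C / \<gamma>)^2 * (norm (u - us l))^2"
proof (cases "us (l + (N + 1)) - us l = 0")
  case False
  let ?w = "us (l + (N + 1)) - us l"
  have w_in: "?w \<in> Xs (l + (N + 1))"
    using X.fin_dim[of "N + 1"] us_in_top[of "N + 1"] us_in_top[of 0]
    by (simp add: fin_dim_subspace_def subspace_diff)
  then have "0 < X.n (Suc (N + 1))"
    using X.nontrivial_iff[of "N + 1"] False by blast
  then have "Ys (l + (N + 1)) - {0} \<noteq> {}"
    using Y.nontrivial_iff[of "N + 1"] dims[of "N + 1"] by (simp add: blk_bd_def)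
  moreover have "a ?w v = a (u - us l) v" if "v \<in> Ys (l + (N + 1))" for v
    using that us_sol[of "N + 1" v] us_sol[of 0 v] u_sol[of v]
    by (simp add: bilinear_lsub[OF bilinear])
  ultimately have "norm ?w \<le> C / \<gamma> * norm (u - us l)"
    by (intro inf_sup_norm_le[OF bound \<open>\<gamma> > 0\<close> False _ inf_sup[OF w_in False]])
  then show ?thesis
    by (metis norm_ge_zero power_mono power_mult_distrib)
qed simp

end

theorem mainTheorem4:
  fixes a :: "'x::{real_inner,complete_space} \<Rightarrow> 'y::{real_inner,complete_space} \<Rightarrow> real"
    and f :: "'y \<Rightarrow> real" and u :: 'x and C\<^sub>a \<gamma> :: real and l N :: nat
    and Xs :: "nat \<Rightarrow> 'x set" and Ys :: "nat \<Rightarrow> 'y set" and us :: "nat \<Rightarrow> 'x"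
    and wX :: "nat \<Rightarrow> 'x" and wY :: "nat \<Rightarrow> 'y"
    and M L U Uinv :: "nat \<Rightarrow> nat \<Rightarrow> real"
  assumes a_bilin: "bilinear a"
    and a_bd: "\<And>w v. \<bar>a w v\<bar> \<le> C\<^sub>a * norm w * norm v"
    and f_lin: "bounded_linear f"
    and u_sol: "\<And>v. a u v = f v"
    and X_sub: "\<And>k. k \<le> N + 1 \<Longrightarrow> fin_dim_subspace (Xs (l + k))"
    and Y_sub: "\<And>k. k \<le> N + 1 \<Longrightarrow> fin_dim_subspace (Ys (l + k))"
    and X_nest: "\<And>k. k \<le> N \<Longrightarrow> Xs (l + k) \<subseteq> Xs (l + Suc k)"
    and Y_nest: "\<And>k. k \<le> N \<Longrightarrow> Ys (l + k) \<subseteq> Ys (l + Suc k)"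
    and dims: "\<And>k. k \<le> N + 1 \<Longrightarrow> dim (Xs (l + k)) = dim (Ys (l + k))"
    and gamma_pos: "\<gamma> > 0"
    and infsup: "\<And>k w. k \<le> N + 1 \<Longrightarrow> w \<in> Xs (l + k) \<Longrightarrow> w \<noteq> 0 \<Longrightarrow>
        (SUP v\<in>Ys (l + k) - {0}. a w v / (norm w * norm v)) \<ge> \<gamma>"
    and us_in: "\<And>k. k \<le> N + 1 \<Longrightarrow> us (l + k) \<in> Xs (l + k)"
    and us_sol: "\<And>k v. k \<le> N + 1 \<Longrightarrow> v \<in> Ys (l + k) \<Longrightarrow> a (us (l + k)) v = f v"
    and onbX: "nested_onb Xs l N wX"
    and onbY: "nested_onb Ys l N wY"
    and M_def: "\<And>r t. r < dim (Xs (l + N + 1)) \<Longrightarrow> t < dim (Xs (l + N + 1)) \<Longrightarrow>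
        M r t = a (wX t) (wY r)"
    and L_lower: "block_lower_unit (blk_bd Xs l) (N + 2) L"
    and U_upper: "block_upper (blk_bd Xs l) (N + 2) U"
    and LU: "\<And>r t. r < dim (Xs (l + N + 1)) \<Longrightarrow> t < dim (Xs (l + N + 1)) \<Longrightarrow>
        M r t = mat_mul (dim (Xs (l + N + 1))) L U r t"
    and Uinv_r: "\<And>r t. r < dim (Xs (l + N + 1)) \<Longrightarrow> t < dim (Xs (l + N + 1)) \<Longrightarrow>
        mat_mul (dim (Xs (l + N + 1))) U Uinv r t = (if r = t then 1 else 0)"
    and Uinv_l: "\<And>r t. r < dim (Xs (l + N + 1)) \<Longrightarrow> t < dim (Xs (l + N + 1)) \<Longrightarrow>
        mat_mul (dim (Xs (l + N + 1))) Uinv U r t = (if r = t then 1 else 0)"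
  shows "(\<Sum>k=l..l+N. (norm (us (k + 1) - us k))\<^sup>2) \<le>
     C\<^sub>a\<^sup>2 / \<gamma>\<^sup>2 * (spec_norm (dim (Xs (l + N + 1))) (dim (Xs (l + N + 1))) U)\<^sup>2
     * Max ((\<lambda>k. (block_col_norm (blk_bd Xs l) (dim (Xs (l + N + 1))) Uinv k)\<^sup>2) ` {1..N+1})
     * (norm (u - us l))\<^sup>2"
proof -
  interpret nested_petrov_galerkin Xs Ys l N wX wY a f us
    by (unfold_locales; fact)
  let ?d = "dim (Xs (l + N + 1))"
  let ?\<mu> = "Max ((\<lambda>k. (block_col_norm (blk_bd Xs l) ?d Uinv k)^2) ` {1..N + 1})"
  have d: "blk_bd Xs l (N + 2) = ?d"
    by (simp add: blk_bd_def)
  interpret block_LU "blk_bd Xs l" "N + 1" L U Uinv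
    using X.n_0 X.n_mono L_lower U_upper Uinv_l d by unfold_locales auto
  have LU_entries: "mat_mul ?d L U r t = a (wX t) (wY r)" if "r < ?d" "t < ?d" for r t
    using that M_def LU by metis
  have top: "(\<Sum>r<?d. (coeff (N + 1) r - coeff 0 r)^2) \<le> (C\<^sub>a / \<gamma>)^2 * (norm (u - us l))^2"
    using sq_norm_top_increment_le[OF a_bd gamma_pos, of u] infsup[of "N + 1"] u_sol
      sq_norm_diff_eq_coeff[of "N + 1" 0] d by simp
  have "0 \<le> (spec_norm ?d ?d U)^2 * ?\<mu>"
    using Max_sq_block_col_norm_nonneg d by simp
  have "(\<Sum>k=l..l+N. (norm (us (k + 1) - us k))^2) = (\<Sum>j<N + 1. \<Sum>r<?d. (coeff (Suc j) r - coeff j r)^2)"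
    using sum_sq_level_increments_eq_coeff d by simp
  also have "\<dots> \<le> (spec_norm ?d ?d U)^2 * ?\<mu> * (\<Sum>r<?d. (coeff (N + 1) r - coeff 0 r)^2)"
    using sum_sq_increments_le[of coeff] coeff_support coeff_galerkin[of "mat_mul ?d L U"] LU_entries d
    by simp
  also have "\<dots> \<le> (spec_norm ?d ?d U)^2 * ?\<mu> * ((C\<^sub>a / \<gamma>)^2 * (norm (u - us l))^2)"
    using top \<open>0 \<le> _ * ?\<mu>\<close> by (rule mult_left_mono)
  finally show ?thesis
    by (simp add: power_divide mult_ac)
qed

end
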